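(* Let $f$ be a symmetric bounded probability density on $\mathbb{R}$. For $k=1,\dots,p$ let $\pi_k$ be a proper probability density on $\mathbb{R}$ and $\nu_k\in\{0,1\}$, and let $a_\sigma,b_\sigma>0$. Consider the model with fixed covariates $x_i\in\mathbb{R}^p$: $y_i\mid\beta,\sigma\sim\frac1\sigma f\big(\frac{y_i-x_i^t\beta}{\sigma}\big)$ independently for $i=1,\dots,n$; conditionally on $\sigma$, $\beta_k\sim\frac{1}{\sigma^{\nu_k}}\pi_k\big(\frac{\beta_k}{\sigma^{\nu_k}}\big)$ independently for $k=1,\dots,p$; and $\sigma$ has density $2\sigma\,{\rm IG}(\sigma^2\mid a_\sigma,b_\sigma)$. If $d\le n$, then $E[\sigma^d\mid\mathcal{D}]<\infty$, where $\mathcal{D}=\{y_1,\dots,y_n\}$.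
   Context: ${\rm IG}(\cdot\mid a,b)$ denotes the inverse-gamma density with shape $a$ and scale $b$; $E[\cdot\mid\mathcal{D}]$ is the posterior expectation. *)

theory Defs
  imports "HOL-Analysis.Analysis"
begin

definition is_density :: "(real \<Rightarrow> real) \<Rightarrow> bool" where
  "is_density g \<longleftrightarrow> g \<in> borel_measurable borel \<and> (\<forall>x. 0 \<le> g x)
     \<and> (\<integral>\<^sup>+ x. ennreal (g x) \<partial>lborel) = 1"

definition IG_density :: "real \<Rightarrow> real \<Rightarrow> real \<Rightarrow> real" where
  "IG_density a b x = (if 0 < x then b powr a / Gamma a * x powr (- a - 1) * exp (- b / x) else 0)"

definition sigma_prior :: "real \<Rightarrow> real \<Rightarrow> real \<Rightarrow> real" where
  "sigma_prior a b s = (if 0 < s then 2 * s * IG_density a b (s\<^sup>2) else 0)"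

definition joint_density ::
  "(real \<Rightarrow> real) \<Rightarrow> ('p::finite \<Rightarrow> real \<Rightarrow> real) \<Rightarrow> ('p \<Rightarrow> nat) \<Rightarrow> real \<Rightarrow> real
   \<Rightarrow> nat \<Rightarrow> (nat \<Rightarrow> real ^ 'p) \<Rightarrow> (nat \<Rightarrow> real) \<Rightarrow> real ^ 'p \<Rightarrow> real \<Rightarrow> real" where
  "joint_density f \<pi> \<nu> a b n x y \<beta> s =
     (\<Prod>i<n. (1 / s) * f ((y i - x i \<bullet> \<beta>) / s))
     * (\<Prod>k\<in>UNIV. (1 / s ^ \<nu> k) * \<pi> k ((\<beta> $ k) / s ^ \<nu> k))
     * sigma_prior a b s"

definition post_expect_sigma_pow ::
  "real \<Rightarrow> (real \<Rightarrow> real) \<Rightarrow> ('p::finite \<Rightarrow> real \<Rightarrow> real) \<Rightarrow> ('p \<Rightarrow> nat) \<Rightarrow> real \<Rightarrow> real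
   \<Rightarrow> nat \<Rightarrow> (nat \<Rightarrow> real ^ 'p) \<Rightarrow> (nat \<Rightarrow> real) \<Rightarrow> ennreal" where
  "post_expect_sigma_pow d f \<pi> \<nu> a b n x y =
     (\<integral>\<^sup>+ s. \<integral>\<^sup>+ \<beta>. ennreal (s powr d * joint_density f \<pi> \<nu> a b n x y \<beta> s) \<partial>lborel \<partial>lborel)
     / (\<integral>\<^sup>+ s. \<integral>\<^sup>+ \<beta>. ennreal (joint_density f \<pi> \<nu> a b n x y \<beta> s) \<partial>lborel \<partial>lborel)"

end

theory Submission
  imports Defs
begin

text \<open>
  Every factor of the likelihood is at most \<open>M / \<sigma>\<close>, where \<open>M\<close> bounds \<open>f\<close>; this removes the data
  and \<open>\<beta>\<close>, and the prior of \<open>\<beta>\<close> then integrates to one for each fixed \<open>\<sigma>\<close>. Hence the numerator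
  of the posterior moment is at most \<open>M\<^sup>n\<close> times the prior moment of \<open>\<sigma>\<close> of order \<open>d - n\<close>, which is
  finite whenever \<open>d - n < 2 a\<close>: the prior density of \<open>\<sigma>\<close> behaves like \<open>\<sigma> powr (- 2 a - 1)\<close> at
  infinity and is damped by \<open>exp (- b / \<sigma>\<^sup>2)\<close> at zero.
\<close>

definition likelihood :: "(real \<Rightarrow> real) \<Rightarrow> nat \<Rightarrow> (nat \<Rightarrow> real ^ 'p::finite) \<Rightarrow> (nat \<Rightarrow> real)
    \<Rightarrow> real ^ 'p \<Rightarrow> real \<Rightarrow> real" where
  "likelihood f n x y \<beta> s = (\<Prod>i<n. (1 / s) * f ((y i - x i \<bullet> \<beta>) / s))"

definition beta_prior :: "('p::finite \<Rightarrow> real \<Rightarrow> real) \<Rightarrow> ('p \<Rightarrow> nat) \<Rightarrow> real \<Rightarrow> real ^ 'p \<Rightarrow> real" where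
  "beta_prior \<pi> \<nu> s \<beta> = (\<Prod>k\<in>UNIV. (1 / s ^ \<nu> k) * \<pi> k ((\<beta> $ k) / s ^ \<nu> k))"

definition sigma_marginal :: "(real \<Rightarrow> real) \<Rightarrow> ('p::finite \<Rightarrow> real \<Rightarrow> real) \<Rightarrow> ('p \<Rightarrow> nat) \<Rightarrow> real
    \<Rightarrow> real \<Rightarrow> nat \<Rightarrow> (nat \<Rightarrow> real ^ 'p) \<Rightarrow> (nat \<Rightarrow> real) \<Rightarrow> real \<Rightarrow> ennreal" where
  "sigma_marginal f \<pi> \<nu> a b n x y s = (\<integral>\<^sup>+ \<beta>. ennreal (joint_density f \<pi> \<nu> a b n x y \<beta> s) \<partial>lborel)"

lemma joint_density_eq:
  "joint_density f \<pi> \<nu> a b n x y \<beta> s = likelihood f n x y \<beta> s * beta_prior \<pi> \<nu> s \<beta> * sigma_prior a b s"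
  by (simp add: joint_density_def likelihood_def beta_prior_def)

lemma is_densityD:
  assumes "is_density g"
  shows "g \<in> borel_measurable borel" "0 \<le> g t" "(\<integral>\<^sup>+ x. ennreal (g x) \<partial>lborel) = 1"
  using assms by (auto simp: is_density_def)

lemma likelihood_le:
  assumes "0 < s" "\<And>t. 0 \<le> f t" "\<And>t. f t \<le> M"
  shows "likelihood f n x y \<beta> s \<le> (M / s) ^ n"
proof -
  have "likelihood f n x y \<beta> s \<le> (\<Prod>i<n. M / s)"
    unfolding likelihood_def using assms by (intro prod_mono) (auto simp: divide_right_mono)
  then show ?thesis by simp
qed

lemma beta_prior_nonneg:
  assumes "0 < s" "\<And>k t. 0 \<le> \<pi> k t"
  shows "0 \<le> beta_prior \<pi> \<nu> s \<beta>"
  using assms by (auto simp: beta_prior_def intro!: prod_nonneg)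

lemma sigma_prior_nonneg: "0 < a \<Longrightarrow> 0 \<le> sigma_prior a b s"
  by (simp add: sigma_prior_def IG_density_def Gamma_real_pos)

lemma sigma_prior_nonpos_eq_0: "s \<le> 0 \<Longrightarrow> sigma_prior a b s = 0"
  by (simp add: sigma_prior_def)

lemma vec_nth_borel_measurable [measurable]:
  "(\<lambda>\<beta>::real ^ 'p::finite. \<beta> $ k) \<in> borel_measurable borel"
  by (intro borel_measurable_continuous_onI continuous_intros)

lemma sigma_prior_borel_measurable [measurable]: "sigma_prior a b \<in> borel_measurable borel"
  unfolding sigma_prior_def[abs_def] IG_density_def by measurable

lemma nn_integral_vec_prod:
  fixes g :: "'p::finite \<Rightarrow> real \<Rightarrow> real"
  assumes "\<And>k. g k \<in> borel_measurable borel" "\<And>k t. 0 \<le> g k t"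
  shows "(\<integral>\<^sup>+ \<beta>. ennreal (\<Prod>k\<in>UNIV. g k (\<beta> $ k)) \<partial>(lborel :: (real ^ 'p) measure))
       = (\<Prod>k\<in>UNIV. \<integral>\<^sup>+ t. ennreal (g k t) \<partial>lborel)"
proof -
  define G where "G b t = ennreal (g (axis_index b) t)" for b :: "real ^ 'p" and t
  have Basis_eq: "(Basis :: (real ^ 'p) set) = range (\<lambda>k. axis k 1)"
    by (auto simp: Basis_vec_def)
  have inj: "inj (\<lambda>k::'p. axis k (1::real))"
    by (auto simp: inj_def axis_eq_axis)
  have "(\<integral>\<^sup>+ \<beta>. (\<Prod>b\<in>Basis. G b (\<beta> \<bullet> b)) \<partial>(lborel :: (real ^ 'p) measure))
      = (\<Prod>b\<in>Basis. \<integral>\<^sup>+ t. G b t \<partial>lborel)"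
    by (rule nn_integral_lborel_prod) (auto simp: G_def intro!: measurable_compose[OF assms(1)])
  moreover have "(\<Prod>b\<in>Basis. G b (\<beta> \<bullet> b)) = ennreal (\<Prod>k\<in>UNIV. g k (\<beta> $ k))" for \<beta> :: "real ^ 'p"
    unfolding Basis_eq by (subst prod.reindex[OF inj]) (simp add: G_def inner_axis prod_ennreal assms(2))
  moreover have "(\<Prod>b\<in>Basis. \<integral>\<^sup>+ t. G b t \<partial>lborel) = (\<Prod>k\<in>UNIV. \<integral>\<^sup>+ t. ennreal (g k t) \<partial>lborel)"
    unfolding Basis_eq by (subst prod.reindex[OF inj]) (simp add: G_def[abs_def])
  ultimately show ?thesis by simp
qed

lemma nn_integral_rescaled_density:
  assumes "is_density g" "0 < c"
  shows "(\<integral>\<^sup>+ t. ennreal ((1 / c) * g (t / c)) \<partial>lborel) = 1"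
proof -
  note g = is_densityD[OF assms(1)]
  note [measurable] = g(1)
  have "(\<integral>\<^sup>+ t. ennreal ((1 / c) * g (t / c)) \<partial>lborel)
      = \<bar>c\<bar> * (\<integral>\<^sup>+ t. ennreal ((1 / c) * g ((0 + c * t) / c)) \<partial>lborel)"
    by (rule nn_integral_real_affine) (use assms in auto)
  also have "\<dots> = c * (\<integral>\<^sup>+ t. ennreal (1 / c) * ennreal (g t) \<partial>lborel)"
    using assms g(2) by (intro arg_cong2[where f = "(*)"] nn_integral_cong) (auto simp flip: ennreal_mult')
  also have "\<dots> = ennreal c * ennreal (1 / c) * (\<integral>\<^sup>+ t. ennreal (g t) \<partial>lborel)"
    by (simp add: nn_integral_cmult mult.assoc)
  also have "\<dots> = 1"
    using assms g(3) by (simp flip: ennreal_mult)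
  finally show ?thesis .
qed

lemma nn_integral_beta_prior:
  assumes "\<And>k. is_density (\<pi> k)" "0 < s"
  shows "(\<integral>\<^sup>+ \<beta>. ennreal (beta_prior \<pi> \<nu> s \<beta>) \<partial>lborel) = 1"
proof -
  note \<pi> = is_densityD[OF assms(1)]
  have "(\<integral>\<^sup>+ \<beta>. ennreal (beta_prior \<pi> \<nu> s \<beta>) \<partial>lborel)
      = (\<Prod>k\<in>UNIV. \<integral>\<^sup>+ t. ennreal ((1 / s ^ \<nu> k) * \<pi> k (t / s ^ \<nu> k)) \<partial>lborel)"
    unfolding beta_prior_def using assms(2) \<pi>(1,2)
    by (intro nn_integral_vec_prod[where g = "\<lambda>k t. (1 / s ^ \<nu> k) * \<pi> k (t / s ^ \<nu> k)"]) auto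
  also have "\<dots> = 1"
    using nn_integral_rescaled_density assms by simp
  finally show ?thesis .
qed

lemma sigma_marginal_le:
  fixes \<nu> :: "'p::finite \<Rightarrow> nat"
  assumes f: "is_density f" "\<And>t. f t \<le> M" and \<pi>: "\<And>k. is_density (\<pi> k)" and a: "0 < a"
  shows "sigma_marginal f \<pi> \<nu> a b n x y s \<le> ennreal (M ^ n * s powr (- real n) * sigma_prior a b s)"
proof (cases "0 < s")
  case s: True
  define C where "C = M ^ n * s powr (- real n) * sigma_prior a b s"
  note f_nn = is_densityD(2)[OF f(1)] and \<pi>_nn = is_densityD(2)[OF \<pi>]
  have [measurable]: "f \<in> borel_measurable borel" "\<pi> k \<in> borel_measurable borel" for k
    using is_densityD(1) f(1) \<pi> by auto
  have C_eq: "C = (M / s) ^ n * sigma_prior a b s"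
    using s
    by (simp add: C_def powr_minus powr_realpow power_divide divide_inverse power_mult_distrib power_inverse)
  have "joint_density f \<pi> \<nu> a b n x y \<beta> s \<le> C * beta_prior \<pi> \<nu> s \<beta>" for \<beta>
  proof -
    have "joint_density f \<pi> \<nu> a b n x y \<beta> s \<le> (M / s) ^ n * beta_prior \<pi> \<nu> s \<beta> * sigma_prior a b s"
      unfolding joint_density_eq using s a f_nn f(2) \<pi>_nn
      by (intro mult_right_mono likelihood_le beta_prior_nonneg sigma_prior_nonneg)
    then show ?thesis by (simp add: C_eq mult_ac)
  qed
  then have "(\<integral>\<^sup>+ \<beta>. ennreal (joint_density f \<pi> \<nu> a b n x y \<beta> s) \<partial>lborel)
      \<le> (\<integral>\<^sup>+ \<beta>. ennreal C * ennreal (beta_prior \<pi> \<nu> s \<beta>) \<partial>lborel)"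
    using s \<pi>_nn by (intro nn_integral_mono) (simp add: beta_prior_nonneg ennreal_leI flip: ennreal_mult'')
  also have "\<dots> = ennreal C"
  proof -
    have "beta_prior \<pi> \<nu> s \<in> borel_measurable lborel"
      unfolding beta_prior_def[abs_def] by measurable
    then show ?thesis using s \<pi> by (simp add: nn_integral_cmult nn_integral_beta_prior)
  qed
  finally show ?thesis by (simp add: sigma_marginal_def C_def)
next
  case False
  then show ?thesis by (simp add: sigma_marginal_def joint_density_eq sigma_prior_nonpos_eq_0)
qed

lemma powr_mult_exp_neg_inverse_square_le:
  fixes q b s :: real
  assumes q: "q < 0" and b: "0 < b" and s: "0 < s"
  shows "s powr q * exp (- b / s\<^sup>2) \<le> (- q / (2 * b)) powr (- q / 2)"
proof -
  define c t where "c = - q / 2" and "t = 1 / s\<^sup>2"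
  have c: "0 < c" and t: "0 < t"
    using q s by (auto simp: c_def t_def)
  have "t = s powr (- 2)"
    using s by (simp add: t_def powr_minus powr_numeral divide_inverse)
  then have s_powr: "s powr q = t powr c"
    by (simp add: powr_powr c_def)
  have "b * t / c \<le> exp (b * t / c)"
    using exp_ge_add_one_self[of "b * t / c"] by linarith
  then have "(b * t / c) powr c \<le> exp (b * t / c) powr c"
    using b c t by (intro powr_mono2) auto
  also have "\<dots> = exp (b * t)"
    using c by (simp add: powr_def)
  finally have "t powr c \<le> exp (b * t) * (c / b) powr c"
    using b c t by (simp add: powr_mult powr_divide field_simps)
  then have "t powr c * exp (- (b * t)) \<le> (c / b) powr c"
    by (simp add: exp_minus field_simps)
  moreover have "- b / s\<^sup>2 = - (b * t)"
    by (simp add: t_def)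
  ultimately show ?thesis
    by (simp add: s_powr c_def)
qed

lemma nn_integral_powr_exp_neg_inverse_square_finite:
  fixes q b :: real
  assumes q: "q < -1" and b: "0 < b"
  shows "(\<integral>\<^sup>+ s. ennreal (if 0 < s then s powr q * exp (- b / s\<^sup>2) else 0) \<partial>lborel) < \<infinity>"
proof -
  define K where "K = (- q / (2 * b)) powr (- q / 2)"
  have bound: "ennreal (if 0 < s then s powr q * exp (- b / s\<^sup>2) else 0)
      \<le> ennreal K * indicator {0..1} s + ennreal (s powr q) * indicator {1..} s" for s
  proof (cases "0 < s")
    case s: True
    show ?thesis
    proof (cases "s \<le> 1")
      case True
      have "s powr q * exp (- b / s\<^sup>2) \<le> K"
        unfolding K_def using powr_mult_exp_neg_inverse_square_le q b s by simp
      then show ?thesis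
        using s True by (simp add: indicator_def ennreal_leI add_increasing2)
    next
      case False
      have "s powr q * exp (- b / s\<^sup>2) \<le> s powr q"
        using b by (simp add: mult_left_le)
      then show ?thesis
        using s False by (simp add: indicator_def ennreal_leI)
    qed
  qed simp
  have "(\<integral>\<^sup>+ s. ennreal (if 0 < s then s powr q * exp (- b / s\<^sup>2) else 0) \<partial>lborel)
      \<le> (\<integral>\<^sup>+ s. ennreal K * indicator {0..1} s + ennreal (s powr q) * indicator {1..} s \<partial>lborel)"
    by (rule nn_integral_mono) (rule bound)
  also have "\<dots> = (\<integral>\<^sup>+ (s::real). ennreal K * indicator {0..1} s \<partial>lborel)
      + (\<integral>\<^sup>+ s. ennreal (s powr q) * indicator {1..} s \<partial>lborel)"
    by (rule nn_integral_add) auto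
  also have "(\<integral>\<^sup>+ (s::real). ennreal K * indicator {0..1} s \<partial>lborel) = ennreal K"
    by (subst nn_integral_cmult_indicator) auto
  also have "(\<integral>\<^sup>+ s. ennreal (s powr q) * indicator {1..} s \<partial>lborel) = ennreal (- (1 powr (q + 1)) / (q + 1))"
    by (rule nn_integral_has_integral_lebesgue') (use has_integral_powr_to_inf[OF q, of 1] in auto)
  finally show ?thesis
    by (simp add: order_le_less_trans)
qed

lemma nn_integral_sigma_prior_moment_finite:
  assumes a: "0 < a" and b: "0 < b" and e: "e < 2 * a"
  shows "(\<integral>\<^sup>+ s. ennreal (s powr e * sigma_prior a b s) \<partial>lborel) < \<infinity>"
proof -
  define C where "C = 2 * b powr a / Gamma a"
  define q where "q = e - 2 * a - 1"
  have C: "0 \<le> C"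
    using a by (simp add: C_def Gamma_real_pos)
  have eq: "s powr e * sigma_prior a b s = C * (if 0 < s then s powr q * exp (- b / s\<^sup>2) else 0)" for s
  proof (cases "0 < s")
    case True
    have "(s\<^sup>2) powr (- a - 1) = s powr (- 2 * a - 2)"
      using True by (simp add: powr_powr flip: powr_numeral)
    moreover have "s powr e * s * s powr (- 2 * a - 2) = s powr (e + 1 + (- 2 * a - 2))"
      using True by (simp only: powr_add powr_one)
    moreover have "e + 1 + (- 2 * a - 2) = q"
      by (simp add: q_def)
    ultimately show ?thesis
      using True by (simp add: C_def sigma_prior_def IG_density_def mult_ac)
  qed (simp add: sigma_prior_nonpos_eq_0)
  have "(\<integral>\<^sup>+ s. ennreal (s powr e * sigma_prior a b s) \<partial>lborel)
      = ennreal C * (\<integral>\<^sup>+ s. ennreal (if 0 < s then s powr q * exp (- b / s\<^sup>2) else 0) \<partial>lborel)"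
    unfolding eq using C by (simp add: ennreal_mult' nn_integral_cmult)
  also have "\<dots> < \<infinity>"
    using nn_integral_powr_exp_neg_inverse_square_finite[of q b] e b
    by (simp add: q_def ennreal_mult_less_top)
  finally show ?thesis .
qed

lemma sigma_marginal_borel_measurable:
  fixes \<nu> :: "'p::finite \<Rightarrow> nat"
  assumes [measurable]: "f \<in> borel_measurable borel" "\<And>k. \<pi> k \<in> borel_measurable borel"
  shows "sigma_marginal f \<pi> \<nu> a b n x y \<in> borel_measurable lborel"
  unfolding sigma_marginal_def[abs_def] joint_density_def
  by (rule lborel.borel_measurable_nn_integral) measurable

lemma post_expect_sigma_pow_eq:
  fixes \<nu> :: "'p::finite \<Rightarrow> nat"
  assumes [measurable]: "f \<in> borel_measurable borel" "\<And>k. \<pi> k \<in> borel_measurable borel"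
  shows "post_expect_sigma_pow d f \<pi> \<nu> a b n x y
    = (\<integral>\<^sup>+ s. ennreal (s powr d) * sigma_marginal f \<pi> \<nu> a b n x y s \<partial>lborel)
      / (\<integral>\<^sup>+ s. sigma_marginal f \<pi> \<nu> a b n x y s \<partial>lborel)"
  unfolding post_expect_sigma_pow_def sigma_marginal_def
  by (intro arg_cong2[where f = "(/)"] nn_integral_cong)
     (simp_all add: ennreal_mult' nn_integral_cmult joint_density_def)

lemma nn_integral_powr_sigma_marginal_finite:
  fixes \<nu> :: "'p::finite \<Rightarrow> nat"
  assumes f: "is_density f" "\<And>t. f t \<le> M" and \<pi>: "\<And>k. is_density (\<pi> k)"
    and a: "0 < a" and b: "0 < b" and d: "d < real n + 2 * a"
  shows "(\<integral>\<^sup>+ s. ennreal (s powr d) * sigma_marginal f \<pi> \<nu> a b n x y s \<partial>lborel) < \<infinity>"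
proof -
  have M_nonneg: "0 \<le> M"
    using f(2)[of 0] is_densityD(2)[OF f(1), of 0] by linarith
  have "ennreal (s powr d) * sigma_marginal f \<pi> \<nu> a b n x y s
      \<le> ennreal (M ^ n) * ennreal (s powr (d - real n) * sigma_prior a b s)" for s
  proof -
    have "ennreal (s powr d) * sigma_marginal f \<pi> \<nu> a b n x y s
        \<le> ennreal (s powr d) * ennreal (M ^ n * s powr (- real n) * sigma_prior a b s)"
      using sigma_marginal_le[OF f \<pi> a] by (rule mult_left_mono) simp
    also have "\<dots> = ennreal (M ^ n) * ennreal (s powr (d - real n) * sigma_prior a b s)"
      using M_nonneg powr_add[of s d "- real n"] by (simp add: mult_ac flip: ennreal_mult')
    finally show ?thesis .
  qed
  then have "(\<integral>\<^sup>+ s. ennreal (s powr d) * sigma_marginal f \<pi> \<nu> a b n x y s \<partial>lborel)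
      \<le> ennreal (M ^ n) * (\<integral>\<^sup>+ s. ennreal (s powr (d - real n) * sigma_prior a b s) \<partial>lborel)"
    by (simp add: nn_integral_mono flip: nn_integral_cmult)
  also have "\<dots> < \<infinity>"
    using nn_integral_sigma_prior_moment_finite[OF a b, of "d - real n"] d
    by (simp add: ennreal_mult_less_top)
  finally show ?thesis .
qed

lemma nn_integral_weighted_divide_less_top:
  assumes "g \<in> borel_measurable M" "(\<integral>\<^sup>+ s. w s * g s \<partial>M) < \<infinity>"
  shows "(\<integral>\<^sup>+ s. w s * g s \<partial>M) / (\<integral>\<^sup>+ s. g s \<partial>M) < \<infinity>"
proof (cases "(\<integral>\<^sup>+ s. g s \<partial>M) = 0")
  case True
  \<comment> \<open>then the numerator vanishes too, and \<open>0 / 0 = 0\<close> in \<open>ennreal\<close>\<close>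
  then have "AE s in M. g s = 0"
    using assms(1) by (simp add: nn_integral_0_iff_AE)
  then have "(\<integral>\<^sup>+ s. w s * g s \<partial>M) = (\<integral>\<^sup>+ s. 0 \<partial>M)"
    by (intro nn_integral_cong_AE) auto
  then show ?thesis by simp
next
  case False
  then show ?thesis
    using assms(2) by (simp add: ennreal_divide_eq_top_iff flip: less_top)
qed

theorem propositionS2:
  fixes f :: "real \<Rightarrow> real"
    and \<pi> :: "'p::finite \<Rightarrow> real \<Rightarrow> real"
    and \<nu> :: "'p \<Rightarrow> nat"
    and a\<^sub>\<sigma> b\<^sub>\<sigma> d :: real
    and n :: nat
    and x :: "nat \<Rightarrow> real ^ 'p"
    and y :: "nat \<Rightarrow> real"
  assumes f_dens: "is_density f"
    and f_sym: "\<forall>t. f (- t) = f t"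
    and f_bdd: "\<exists>M. \<forall>t. f t \<le> M"
    and \<pi>_dens: "\<forall>k. is_density (\<pi> k)"
    and \<nu>_01: "\<forall>k. \<nu> k \<in> {0, 1}"
    and a_pos: "0 < a\<^sub>\<sigma>" and b_pos: "0 < b\<^sub>\<sigma>"
    and d_le: "d \<le> real n"
  shows "post_expect_sigma_pow d f \<pi> \<nu> a\<^sub>\<sigma> b\<^sub>\<sigma> n x y < \<infinity>"
proof -
  obtain M where M: "\<And>t. f t \<le> M"
    using f_bdd by blast
  have measurable: "f \<in> borel_measurable borel" "\<And>k. \<pi> k \<in> borel_measurable borel"
    using is_densityD(1) f_dens \<pi>_dens by auto
  have "d < real n + 2 * a\<^sub>\<sigma>"
    using a_pos d_le by linarith
  then show ?thesis
    unfolding post_expect_sigma_pow_eq[OF measurable]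
    using f_dens M \<pi>_dens a_pos b_pos
    by (intro nn_integral_weighted_divide_less_top sigma_marginal_borel_measurable
        nn_integral_powr_sigma_marginal_finite measurable) auto
qed

end
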